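(* Define, for $u>1$, $$D(u)=L(u)\int_0^1\frac{\ell(u,v)}{(u^2-v^2)^2}\,dv.$$ Then as $y\to\infty$, $$\int_1^\infty D(u)\cos(uy)\,du=O\Big(\frac{(\log y)^2}{y}\Big),\qquad\int_1^\infty uD(u)\sin(uy)\,du=O\Big(\frac{(\log y)^2}{y}\Big).$$
   Context: For $u>1$ let $L(u)=\log\frac{u+1}{u-1}$, and for $u\ge1$, $0<v\le1$ let $\ell(u,v)=\log\frac{1}{uv}$. *)

theory Defs
  imports "HOL-Analysis.Analysis" "HOL-Library.Landau_Symbols"
begin

definition L :: "real \<Rightarrow> real" where
  "L u = ln ((u + 1) / (u - 1))"

definition ell :: "real \<Rightarrow> real \<Rightarrow> real" where
  "ell u v = ln (1 / (u * v))"

definition D :: "real \<Rightarrow> real" where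
  "D u = L u * integral {0..1} (\<lambda>v. ell u v / (u\<^sup>2 - v\<^sup>2)\<^sup>2)"

end

theory Submission
  imports Defs "HOL-Real_Asymp.Real_Asymp"
begin

(* Evaluating the v-integral gives D = L B - L q / (2 u^2) - L^2 ln u / (4 u^3) with
   B(u) = int_0^1 -ln v / (u^2 - v^2)^2 dv and q(u) = ln u / (u^2 - 1), and similarly for u D(u).
   Each term is b(u) g(u) with b >= 0 decreasing, b <= L^2, and g bounded by M and K-Lipschitz.
   Shifting u by half a period h = pi / y flips the sign of cos (u y) and sin (u y), so twice the
   integral of b g tau(u y) is the integral of (b g (u) - b g (u + h)) tau(u y) plus a boundary
   layer of length h; this is at most 2 M int_1^(1+h) b + K h int_1^oo b.  Near u = 1 we have
   L(u) <= 2 - ln (u - 1), so the window integral is O(h (log h)^2), i.e. O((log y)^2 / y). *)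

lemma has_integral_shift_UNIV:
  fixes f :: "real \<Rightarrow> real"
  assumes "(f has_integral i) UNIV"
  shows "((\<lambda>x. f (x + c)) has_integral i) UNIV"
  unfolding has_integral_alt'[of _ i UNIV]
proof (intro conjI allI impI)
  have shift: "(\<lambda>x. f (x + c)) = f \<circ> (+) c" by (auto simp: add.commute)
  fix a b :: real
  show "(\<lambda>x. if x \<in> UNIV then f (x + c) else 0) integrable_on cbox a b"
    using assms integrable_on_shift_Icc_real[of f c a b]
    by (simp add: shift has_integral_alt'[of _ i UNIV])
next
  fix e :: real assume "e > 0"
  then obtain R where "R > 0" and R: "\<And>a b. ball 0 R \<subseteq> cbox a b \<Longrightarrow> norm (integral (cbox a b) f - i) < e"
    using assms unfolding has_integral_alt'[of f i UNIV] by auto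
  show "\<exists>B>0. \<forall>a b. ball 0 B \<subseteq> cbox a b \<longrightarrow>
          norm (integral (cbox a b) (\<lambda>x. if x \<in> UNIV then f (x + c) else 0) - i) < e"
  proof (intro exI[of _ "R + \<bar>c\<bar>"] conjI allI impI)
    fix a b :: real assume sub: "ball 0 (R + \<bar>c\<bar>) \<subseteq> cbox a b"
    have "ball 0 R \<subseteq> cbox (a + c) (b + c)"
    proof
      fix x :: real assume "x \<in> ball 0 R"
      then have "x - c \<in> ball 0 (R + \<bar>c\<bar>)" by (auto simp: dist_real_def)
      then have "x - c \<in> cbox a b" using sub by blast
      then show "x \<in> cbox (a + c) (b + c)" by auto
    qed
    moreover have "integral (cbox a b) (\<lambda>x. f (x + c)) = integral (cbox (a + c) (b + c)) f"
      using integral_shift_Icc_real[of a b f c] by (simp add: add.commute comp_def)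
    ultimately show "norm (integral (cbox a b) (\<lambda>x. if x \<in> UNIV then f (x + c) else 0) - i) < e"
      using R by simp
  qed (use \<open>R > 0\<close> in simp)
qed

lemma fundamental_theorem_of_calculus_at_right:
  fixes F f :: "real \<Rightarrow> real"
  assumes "a < b"
    and deriv: "\<And>x. a < x \<Longrightarrow> x \<le> b \<Longrightarrow> (F has_real_derivative f x) (at x)"
    and lim: "(F \<longlongrightarrow> F a) (at_right a)"
  shows "(f has_integral (F b - F a)) {a..b}"
proof (rule fundamental_theorem_of_calculus_interior)
  show "continuous_on {a..b} F"
    unfolding continuous_on_def
  proof
    fix x assume x: "x \<in> {a..b}"
    show "(F \<longlongrightarrow> F x) (at x within {a..b})"
    proof (cases "x = a")
      case True
      then show ?thesis using lim at_within_Icc_at_right[OF \<open>a < b\<close>] by simp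
    next
      case False
      then have "isCont F x" using x deriv DERIV_isCont by force
      then show ?thesis by (metis at_le isCont_def subset_UNIV tendsto_mono)
    qed
  qed
  show "\<And>x. x \<in> {a<..<b} \<Longrightarrow> (F has_vector_derivative f x) (at x)"
    using deriv by (auto simp: has_real_derivative_iff_has_vector_derivative[symmetric])
qed (use \<open>a < b\<close> in simp)

lemma has_integral_Ioc_iff_Icc:
  fixes f :: "real \<Rightarrow> real"
  shows "(f has_integral I) {a<..b} \<longleftrightarrow> (f has_integral I) {a..b}"
  by (rule has_integral_spike_set_eq) (auto intro: negligible_subset[of "{a}"])

lemma absolutely_integrable_mult_bounded_continuous:
  fixes b f :: "real \<Rightarrow> real"
  assumes "b absolutely_integrable_on S" "S \<in> sets lebesgue"
    and "continuous_on S f" "\<And>u. u \<in> S \<Longrightarrow> \<bar>f u\<bar> \<le> M"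
  shows "(\<lambda>u. b u * f u) absolutely_integrable_on S"
proof -
  have "f \<in> borel_measurable (lebesgue_on S)"
    using assms(3,2) by (rule continuous_imp_measurable_on_sets_lebesgue)
  moreover have "bounded (f ` S)"
    using assms(4) unfolding bounded_real by blast
  ultimately have "(\<lambda>u. f u * b u) absolutely_integrable_on S"
    using assms(1,2) by (intro absolutely_integrable_bounded_measurable_product_real)
  then show ?thesis by (simp add: mult.commute)
qed

lemma borel_measurable_antimono_on:
  fixes b :: "real \<Rightarrow> real"
  assumes "antimono_on S b"
  shows "b \<in> borel_measurable (lebesgue_on S)"
proof -
  have "mono_on S (\<lambda>u. - b u)"
    using assms by (auto simp: monotone_on_def)
  then have "(\<lambda>u. - b u) \<in> borel_measurable (restrict_space borel S)"
    by (rule borel_measurable_mono_on_fnc)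
  moreover have "space lborel = space lebesgue" "sets borel \<subseteq> sets lebesgue"
    by force+
  ultimately have "(\<lambda>u. - b u) \<in> borel_measurable (lebesgue_on S)"
    by (metis borel_measurable_subalgebra mono_restrict_space space_lborel space_restrict_space)
  then show ?thesis using borel_measurable_uminus by fastforce
qed

(* W (u + h) accounts for the boundary layer a - h < u <= a, where only P (u + h) is nonzero. *)
lemma shifted_difference_bound:
  fixes b g :: "real \<Rightarrow> real"
  assumes b_nonneg: "\<And>u. a < u \<Longrightarrow> 0 \<le> b u" and b_anti: "antimono_on {a<..} b"
    and g_bound: "\<And>u. a < u \<Longrightarrow> \<bar>g u\<bar> \<le> M" and g_lip: "lipschitz_on K {a<..} g"
    and "0 < h"
  defines "P \<equiv> \<lambda>u. if u \<in> {a<..} then b u * g u else 0"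
    and "E \<equiv> \<lambda>u. if u \<in> {a<..} then b u else 0"
    and "W \<equiv> \<lambda>u. if u \<in> {a<..a + h} then b u else 0"
  shows "\<bar>P u - P (u + h)\<bar> \<le> M * (E u - E (u + h)) + 2 * M * W (u + h) + K * h * E (u + h)"
proof (cases "a < u")
  case True
  then have u: "a < u" "a < u + h" using \<open>0 < h\<close> by auto
  have b_le: "b (u + h) \<le> b u"
    using b_anti u \<open>0 < h\<close> by (auto simp: monotone_on_def)
  have "\<bar>P u - P (u + h)\<bar> = \<bar>(b u - b (u + h)) * g u + b (u + h) * (g u - g (u + h))\<bar>"
    using u by (simp add: P_def algebra_simps)
  also have "\<dots> \<le> \<bar>(b u - b (u + h)) * g u\<bar> + \<bar>b (u + h) * (g u - g (u + h))\<bar>"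
    by (rule abs_triangle_ineq)
  also have "\<dots> = (b u - b (u + h)) * \<bar>g u\<bar> + b (u + h) * \<bar>g u - g (u + h)\<bar>"
    using b_le b_nonneg[OF u(2)] by (simp add: abs_mult)
  also have "\<dots> \<le> (b u - b (u + h)) * M + b (u + h) * (K * h)"
    using lipschitz_onD[OF g_lip, of u "u + h"] g_bound b_le b_nonneg u \<open>0 < h\<close>
    by (intro add_mono mult_left_mono) (auto simp: dist_real_def)
  finally show ?thesis using u by (simp add: E_def W_def algebra_simps)
next
  case u: False
  have "0 \<le> K" using g_lip by (rule lipschitz_on_nonneg)
  show ?thesis
  proof (cases "a < u + h")
    case True
    have "\<bar>P u - P (u + h)\<bar> = b (u + h) * \<bar>g (u + h)\<bar>"
      using u True b_nonneg by (simp add: P_def abs_mult)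
    also have "\<dots> \<le> b (u + h) * M"
      using True by (intro mult_left_mono b_nonneg g_bound)
    finally have "\<bar>P u - P (u + h)\<bar> \<le> b (u + h) * M" .
    moreover have "M * (E u - E (u + h)) + 2 * M * W (u + h) = b (u + h) * M"
      using u True by (simp add: E_def W_def algebra_simps)
    moreover have "0 \<le> K * h * E (u + h)"
      using \<open>0 \<le> K\<close> \<open>0 < h\<close> b_nonneg[OF True] True by (simp add: E_def)
    ultimately show ?thesis by linarith
  next
    case False
    then show ?thesis using u by (simp add: P_def E_def W_def)
  qed
qed

lemma has_integral_shift_majorant:
  fixes b :: "real \<Rightarrow> real" and h M K :: real
  assumes "\<And>u. a < u \<Longrightarrow> 0 \<le> b u" "b integrable_on {a<..}"
  defines "E \<equiv> \<lambda>u. if u \<in> {a<..} then b u else 0"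
    and "W \<equiv> \<lambda>u. if u \<in> {a<..a + h} then b u else 0"
  shows "((\<lambda>u. M * (E u - E (u + h)) + 2 * M * W (u + h) + K * h * E (u + h)) has_integral
           2 * M * integral {a<..a + h} b + K * h * integral {a<..} b) UNIV"
proof -
  have "b absolutely_integrable_on {a<..}"
    using assms(1,2) by (intro nonnegative_absolutely_integrable_1) auto
  then have "b absolutely_integrable_on {a<..a + h}"
    by (rule set_integrable_subset) auto
  then have "(W has_integral integral {a<..a + h} b) UNIV"
    unfolding W_def has_integral_restrict_UNIV by (simp add: absolutely_integrable_on_def has_integral_integral)
  moreover have E: "(E has_integral integral {a<..} b) UNIV"
    unfolding E_def has_integral_restrict_UNIV using assms(2) by (simp add: has_integral_integral)
  ultimately have "((\<lambda>u. M * (E u - E (u + h)) + 2 * M * W (u + h) + K * h * E (u + h)) has_integral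
      M * (integral {a<..} b - integral {a<..} b) + 2 * M * integral {a<..a + h} b + K * h * integral {a<..} b) UNIV"
    by (intro has_integral_add has_integral_mult_right has_integral_diff E has_integral_shift_UNIV)
  then show ?thesis by simp
qed

locale pi_antiperiodic =
  fixes \<tau> :: "real \<Rightarrow> real"
  assumes continuous: "continuous_on UNIV \<tau>"
    and abs_le_one: "\<bar>\<tau> t\<bar> \<le> 1"
    and antiperiodic: "\<tau> (t + pi) = - \<tau> t"
begin

lemma integrable_on_weighted:
  fixes b g :: "real \<Rightarrow> real"
  assumes "\<And>u. a < u \<Longrightarrow> 0 \<le> b u" "b integrable_on {a<..}"
    and "\<And>u. a < u \<Longrightarrow> \<bar>g u\<bar> \<le> M" "continuous_on {a<..} g"
  shows "(\<lambda>u. b u * g u * \<tau> (u * y)) integrable_on {a<..}"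
proof -
  have "b absolutely_integrable_on {a<..}"
    using assms(1,2) by (intro nonnegative_absolutely_integrable_1) auto
  moreover have "continuous_on {a<..} (\<lambda>u. g u * \<tau> (u * y))"
    by (intro continuous_intros assms(4) continuous_on_compose2[OF continuous]) auto
  moreover have "\<bar>g u * \<tau> (u * y)\<bar> \<le> M" if "u \<in> {a<..}" for u
    using mult_mono[OF assms(3) abs_le_one, of u "u * y"] assms(3)[of u] that
    by (simp add: abs_mult)
  ultimately have "(\<lambda>u. b u * (g u * \<tau> (u * y))) absolutely_integrable_on {a<..}"
    by (intro absolutely_integrable_mult_bounded_continuous) auto
  then show ?thesis by (simp add: absolutely_integrable_on_def mult.assoc)
qed

lemma has_integral_half_period_difference:
  assumes "((\<lambda>u. P u * \<tau> (u * y)) has_integral I) UNIV" and "h * y = pi"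
  shows "((\<lambda>u. (P u - P (u + h)) * \<tau> (u * y)) has_integral 2 * I) UNIV"
proof -
  have "((\<lambda>u. P (u + h) * \<tau> ((u + h) * y)) has_integral I) UNIV"
    using has_integral_shift_UNIV[OF assms(1)] .
  moreover have "\<tau> ((u + h) * y) = - \<tau> (u * y)" for u
    using antiperiodic[of "u * y"] assms(2) by (simp add: distrib_right)
  ultimately have "((\<lambda>u. - (P (u + h) * \<tau> (u * y))) has_integral I) UNIV" by simp
  from has_integral_add[OF assms(1) this] show ?thesis
    by (simp add: algebra_simps)
qed

lemma integral_weighted_bound:
  fixes b g :: "real \<Rightarrow> real"
  assumes b_nonneg: "\<And>u. a < u \<Longrightarrow> 0 \<le> b u" and b_anti: "antimono_on {a<..} b"
    and b_int: "b integrable_on {a<..}"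
    and g_bound: "\<And>u. a < u \<Longrightarrow> \<bar>g u\<bar> \<le> M" and g_lip: "lipschitz_on K {a<..} g"
    and "0 < y"
  shows "\<bar>integral {a<..} (\<lambda>u. b u * g u * \<tau> (u * y))\<bar>
           \<le> M * integral {a<..a + pi / y} b + K * pi / (2 * y) * integral {a<..} b"
proof -
  define h where "h = pi / y"
  have "0 < h" "h * y = pi" using \<open>0 < y\<close> by (auto simp: h_def)
  define P where "P = (\<lambda>u. if u \<in> {a<..} then b u * g u else 0)"
  define E where "E = (\<lambda>u. if u \<in> {a<..} then b u else 0)"
  define W where "W = (\<lambda>u. if u \<in> {a<..a + h} then b u else 0)"
  define I where "I = integral {a<..} (\<lambda>u. b u * g u * \<tau> (u * y))"
  have "(\<lambda>u. b u * g u * \<tau> (u * y)) integrable_on {a<..}"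
    by (rule integrable_on_weighted[OF b_nonneg b_int g_bound lipschitz_on_continuous_on[OF g_lip]])
  then have "((\<lambda>u. if u \<in> {a<..} then b u * g u * \<tau> (u * y) else 0) has_integral I) UNIV"
    unfolding has_integral_restrict_UNIV I_def by (rule integrable_integral)
  moreover have "(\<lambda>u. if u \<in> {a<..} then b u * g u * \<tau> (u * y) else 0) = (\<lambda>u. P u * \<tau> (u * y))"
    by (auto simp: P_def)
  ultimately have "((\<lambda>u. P u * \<tau> (u * y)) has_integral I) UNIV" by simp
  from has_integral_half_period_difference[OF this \<open>h * y = pi\<close>]
  have "((\<lambda>u. (P u - P (u + h)) * \<tau> (u * y)) has_integral 2 * I) UNIV" .
  moreover have "((\<lambda>u. M * (E u - E (u + h)) + 2 * M * W (u + h) + K * h * E (u + h)) has_integral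
      2 * M * integral {a<..a + h} b + K * h * integral {a<..} b) UNIV"
    unfolding E_def W_def by (rule has_integral_shift_majorant[OF b_nonneg b_int])
  moreover have "norm ((P u - P (u + h)) * \<tau> (u * y))
      \<le> (M * (E u - E (u + h)) + 2 * M * W (u + h) + K * h * E (u + h)) \<bullet> 1" for u
  proof -
    have "norm ((P u - P (u + h)) * \<tau> (u * y)) \<le> \<bar>P u - P (u + h)\<bar>"
      using abs_le_one[of "u * y"] by (simp add: abs_mult mult_left_le)
    also have "\<dots> \<le> M * (E u - E (u + h)) + 2 * M * W (u + h) + K * h * E (u + h)"
      using shifted_difference_bound[OF b_nonneg b_anti g_bound g_lip \<open>0 < h\<close>, of u]
      by (simp only: P_def E_def W_def)
    finally show ?thesis by simp
  qed
  ultimately have "norm (2 * I) \<le> (2 * M * integral {a<..a + h} b + K * h * integral {a<..} b) \<bullet> 1"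
    by (rule has_integral_norm_bound_integral_component)
  then show ?thesis by (simp add: I_def h_def)
qed

end

lemma L_pos: "1 < u \<Longrightarrow> 0 < L u"
  unfolding L_def by (simp add: divide_simps)

lemma L_le: "1 < u \<Longrightarrow> L u \<le> 2 / (u - 1)"
proof -
  assume "1 < u"
  then have "L u \<le> (u + 1) / (u - 1) - 1"
    unfolding L_def by (intro ln_le_minus_one) (simp add: divide_simps)
  also have "\<dots> = 2 / (u - 1)" using \<open>1 < u\<close> by (simp add: field_simps)
  finally show ?thesis .
qed

lemma L_ge: "1 < u \<Longrightarrow> 2 / (u + 1) \<le> L u"
proof -
  assume "1 < u"
  then have "- L u \<le> (u - 1) / (u + 1) - 1"
    using ln_le_minus_one[of "(u - 1) / (u + 1)"] by (simp add: L_def ln_div)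
  also have "\<dots> = - (2 / (u + 1))" using \<open>1 < u\<close> by (simp add: field_simps)
  finally show ?thesis by simp
qed

lemma L_le_near_one: "1 < u \<Longrightarrow> u \<le> 2 \<Longrightarrow> L u \<le> 2 - ln (u - 1)"
  using ln_le_minus_one[of "u + 1"] by (simp add: L_def ln_div)

lemma L_antimono: "antimono_on {1<..} L"
proof (rule monotone_onI)
  fix u w :: real assume "u \<in> {1<..}" "w \<in> {1<..}" "u \<le> w"
  then have "(w + 1) / (w - 1) \<le> (u + 1) / (u - 1)"
    by (simp add: divide_simps) (simp add: algebra_simps)
  then show "L w \<le> L u"
    unfolding L_def using \<open>w \<in> {1<..}\<close> by (intro ln_mono) auto
qed

lemma continuous_on_L: "continuous_on {1<..} L"
  unfolding L_def[abs_def] by (intro continuous_on_ln continuous_intros) (auto simp: field_simps)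

definition log_sq_window :: "real \<Rightarrow> real" where
  "log_sq_window h = h * (10 - 6 * ln h + (ln h)\<^sup>2)"

lemma has_integral_log_majorant:
  fixes h :: real
  assumes "0 < h"
  shows "((\<lambda>t. (2 - ln t)\<^sup>2) has_integral log_sq_window h) {0..h}"
proof -
  have deriv: "0 < t \<Longrightarrow> (log_sq_window has_real_derivative (2 - ln t)\<^sup>2) (at t)" for t
    unfolding log_sq_window_def[abs_def]
    by (rule derivative_eq_intros refl | simp)+ (simp add: field_simps power2_eq_square)
  have "((\<lambda>t. (2 - ln t)\<^sup>2) has_integral log_sq_window h - log_sq_window 0) {0..h}"
  proof (rule fundamental_theorem_of_calculus_at_right)
    show "(log_sq_window \<longlongrightarrow> log_sq_window 0) (at_right 0)"
      unfolding log_sq_window_def[abs_def] by real_asymp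
  qed (use assms deriv in auto)
  then show ?thesis by (simp add: log_sq_window_def)
qed

lemma L_sq_measurable:
  "S \<subseteq> {1<..} \<Longrightarrow> S \<in> sets lebesgue \<Longrightarrow> (\<lambda>u. (L u)\<^sup>2) \<in> borel_measurable (lebesgue_on S)"
  by (intro continuous_imp_measurable_on_sets_lebesgue continuous_intros continuous_on_subset[OF continuous_on_L])

lemma L_sq_window:
  assumes "0 < h" "h \<le> 1"
  shows "(\<lambda>u. (L u)\<^sup>2) integrable_on {1<..1 + h}"
    and "integral {1<..1 + h} (\<lambda>u. (L u)\<^sup>2) \<le> log_sq_window h"
proof -
  have majorant: "((\<lambda>u. (2 - ln (u - 1))\<^sup>2) has_integral log_sq_window h) {1<..1 + h}"
    using has_integral_shift_real_ivl[OF has_integral_log_majorant[OF \<open>0 < h\<close>], of "-1"]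
    by (simp add: has_integral_Ioc_iff_Icc add.commute[of h 1])
  have le: "norm ((L u)\<^sup>2) \<le> (2 - ln (u - 1))\<^sup>2" if "u \<in> {1<..1 + h}" for u
    using that assms L_le_near_one[of u] L_pos[of u] by (auto intro!: power_mono)
  have "(\<lambda>u. (L u)\<^sup>2) \<in> borel_measurable (lebesgue_on {1<..1 + h})"
    by (rule L_sq_measurable) auto
  from measurable_bounded_by_integrable_imp_integrable[OF this has_integral_integrable[OF majorant] le]
  show int: "(\<lambda>u. (L u)\<^sup>2) integrable_on {1<..1 + h}" by simp
  have "integral {1<..1 + h} (\<lambda>u. (L u)\<^sup>2) \<le> integral {1<..1 + h} (\<lambda>u. (2 - ln (u - 1))\<^sup>2)"
    using le by (intro integral_le[OF int has_integral_integrable[OF majorant]]) auto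
  then show "integral {1<..1 + h} (\<lambda>u. (L u)\<^sup>2) \<le> log_sq_window h"
    using majorant by (simp add: integral_unique)
qed

lemma L_sq_integrable: "(\<lambda>u. (L u)\<^sup>2) integrable_on {1<..}"
proof -
  have majorant: "((\<lambda>u. 16 * (1 / u ^ 2)) has_integral 16 * (1 / (real (2 - 1) * 2 ^ (2 - 1)))) {2..}"
    by (intro has_integral_mult_right has_integral_inverse_power_to_inf) auto
  have le: "norm ((L u)\<^sup>2) \<le> 16 * (1 / u ^ 2)" if "u \<in> {2..}" for u
  proof -
    have "2 / (u - 1) \<le> 4 / u"
      using that by (simp add: divide_simps)
    then have "L u \<le> 4 / u"
      using L_le[of u] that by simp
    then have "(L u)\<^sup>2 \<le> (4 / u)\<^sup>2"
      using L_pos[of u] that by (intro power_mono) auto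
    then show ?thesis by (simp add: power_divide)
  qed
  have "(\<lambda>u. (L u)\<^sup>2) \<in> borel_measurable (lebesgue_on {2..})"
    by (rule L_sq_measurable) auto
  from measurable_bounded_by_integrable_imp_integrable[OF this has_integral_integrable[OF majorant] le]
  have "(\<lambda>u. (L u)\<^sup>2) integrable_on {2..}" by simp
  moreover have "(\<lambda>u. (L u)\<^sup>2) integrable_on {1<..2}"
    using L_sq_window(1)[of 1] by simp
  ultimately show ?thesis
    by (rule integrable_Un') (auto intro: negligible_subset[of "{2}"])
qed

definition L_dominated :: "(real \<Rightarrow> real) \<Rightarrow> bool" where
  "L_dominated w \<longleftrightarrow> antimono_on {1<..} w \<and> (\<forall>u>1. 0 \<le> w u \<and> w u \<le> L u)"

lemma L_dominated_L: "L_dominated L"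
  using L_antimono L_pos by (auto simp: L_dominated_def less_imp_le)

lemma L_dominated_weight:
  assumes "L_dominated w"
  shows "\<And>u. 1 < u \<Longrightarrow> 0 \<le> L u * w u" and "\<And>u. 1 < u \<Longrightarrow> L u * w u \<le> (L u)\<^sup>2"
    and "antimono_on {1<..} (\<lambda>u. L u * w u)"
proof -
  have w: "0 \<le> w u" "w u \<le> L u" "0 \<le> L u" if "1 < u" for u
    using assms L_pos[OF that] that by (auto simp: L_dominated_def)
  show "\<And>u. 1 < u \<Longrightarrow> 0 \<le> L u * w u"
    using w by simp
  show "\<And>u. 1 < u \<Longrightarrow> L u * w u \<le> (L u)\<^sup>2"
    using w by (simp add: power2_eq_square mult_left_mono)
  show "antimono_on {1<..} (\<lambda>u. L u * w u)"
    using assms L_antimono w by (auto simp: L_dominated_def monotone_on_def intro!: mult_mono)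
qed

lemma L_sq_dominated_integrable:
  fixes b :: "real \<Rightarrow> real"
  assumes "\<And>u. 1 < u \<Longrightarrow> 0 \<le> b u" "\<And>u. 1 < u \<Longrightarrow> b u \<le> (L u)\<^sup>2" "antimono_on {1<..} b"
    and S: "S \<subseteq> {1<..}" "S \<in> sets lebesgue" "(\<lambda>u. (L u)\<^sup>2) integrable_on S"
  shows "b integrable_on S" and "integral S b \<le> integral S (\<lambda>u. (L u)\<^sup>2)"
proof -
  have bounds: "0 \<le> b u" "b u \<le> (L u)\<^sup>2" if "u \<in> S" for u
    using assms(1,2) that S(1) by auto
  have "b \<in> borel_measurable (lebesgue_on S)"
    by (rule borel_measurable_antimono_on[OF monotone_on_subset[OF assms(3) S(1)]])
  moreover have "norm (b u) \<le> (L u)\<^sup>2" if "u \<in> S" for u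
    using bounds[OF that] by simp
  ultimately show int: "b integrable_on S"
    by (rule measurable_bounded_by_integrable_imp_integrable[OF _ S(3) _ S(2)])
  show "integral S b \<le> integral S (\<lambda>u. (L u)\<^sup>2)"
    using bounds(2) by (rule integral_le[OF int S(3)])
qed

lemma bigo_at_top_of_bound:
  fixes f g h :: "real \<Rightarrow> real"
  assumes "\<And>y. y0 \<le> y \<Longrightarrow> \<bar>f y\<bar> \<le> g y" "g \<in> O[at_top](h)"
  shows "f \<in> O[at_top](h)"
proof -
  have "eventually (\<lambda>y. norm (f y) \<le> 1 * norm (g y)) at_top"
  proof (rule eventually_at_top_linorderI)
    fix y assume "y0 \<le> y"
    then show "norm (f y) \<le> 1 * norm (g y)"
      using assms(1)[of y] by simp
  qed
  then have "f \<in> O[at_top](g)" by (rule bigoI)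
  then show ?thesis using assms(2) by (rule landau_o.big_trans)
qed

lemma bigo_window_bound:
  "(\<lambda>y. c1 * log_sq_window (pi / y) + c2 * (pi / (2 * y))) \<in> O[at_top](\<lambda>y. (ln y)\<^sup>2 / y)"
proof -
  have "(\<lambda>y. log_sq_window (pi / y)) \<in> O[at_top](\<lambda>y. (ln y)\<^sup>2 / y)"
    "(\<lambda>y::real. pi / (2 * y)) \<in> O[at_top](\<lambda>y. (ln y)\<^sup>2 / y)"
    unfolding log_sq_window_def by real_asymp+
  then have "(\<lambda>y. c1 * log_sq_window (pi / y)) \<in> O[at_top](\<lambda>y. (ln y)\<^sup>2 / y)"
    "(\<lambda>y::real. c2 * (pi / (2 * y))) \<in> O[at_top](\<lambda>y. (ln y)\<^sup>2 / y)"
    by (subst cmult_in_bigo_iff, blast)+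
  then show ?thesis by (rule sum_in_bigo)
qed

definition log_sq_decay :: "(real \<Rightarrow> real) \<Rightarrow> (real \<Rightarrow> real) \<Rightarrow> bool" where
  "log_sq_decay \<tau> f \<longleftrightarrow> (\<forall>y. (\<lambda>u. f u * \<tau> (u * y)) integrable_on {1<..}) \<and>
     (\<lambda>y. integral {1<..} (\<lambda>u. f u * \<tau> (u * y))) \<in> O[at_top](\<lambda>y. (ln y)\<^sup>2 / y)"

lemma log_sq_decay_diff:
  assumes "log_sq_decay \<tau> f" "log_sq_decay \<tau> g"
  shows "log_sq_decay \<tau> (\<lambda>u. f u - g u)"
proof -
  have int: "(\<lambda>u. f u * \<tau> (u * y)) integrable_on {1<..}" "(\<lambda>u. g u * \<tau> (u * y)) integrable_on {1<..}" for y
    using assms by (auto simp: log_sq_decay_def)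
  have "(\<lambda>u. (f u - g u) * \<tau> (u * y)) = (\<lambda>u. f u * \<tau> (u * y) - g u * \<tau> (u * y))" for y
    by (simp add: left_diff_distrib)
  then show ?thesis
    using assms int unfolding log_sq_decay_def by (simp add: integrable_diff integral_diff sum_in_bigo(2))
qed

lemma log_sq_decay_cong:
  assumes "\<And>u. 1 < u \<Longrightarrow> f u = g u" "log_sq_decay \<tau> f"
  shows "log_sq_decay \<tau> g"
proof -
  have "(\<lambda>u. f u * \<tau> (u * y)) integrable_on {1<..} \<longleftrightarrow> (\<lambda>u. g u * \<tau> (u * y)) integrable_on {1<..}"
    and "integral {1<..} (\<lambda>u. f u * \<tau> (u * y)) = integral {1<..} (\<lambda>u. g u * \<tau> (u * y))" for y
    using assms(1) by (auto intro!: integrable_cong integral_cong)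
  then show ?thesis using assms(2) by (simp add: log_sq_decay_def)
qed

context pi_antiperiodic
begin

lemma integral_L_sq_weighted_bound:
  fixes b g :: "real \<Rightarrow> real"
  assumes b_nonneg: "\<And>u. 1 < u \<Longrightarrow> 0 \<le> b u" and b_le: "\<And>u. 1 < u \<Longrightarrow> b u \<le> (L u)\<^sup>2"
    and b_anti: "antimono_on {1<..} b"
    and g_bound: "\<And>u. 1 < u \<Longrightarrow> \<bar>g u\<bar> \<le> M" and g_lip: "lipschitz_on K {1<..} g"
    and "pi \<le> y"
  shows "\<bar>integral {1<..} (\<lambda>u. b u * g u * \<tau> (u * y))\<bar>
           \<le> M * log_sq_window (pi / y) + K * integral {1<..} (\<lambda>u. (L u)\<^sup>2) * (pi / (2 * y))"
proof -
  note b_int = L_sq_dominated_integrable[OF b_nonneg b_le b_anti]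
  have "0 \<le> M" using g_bound[of 2] by simp
  have "0 \<le> K" using g_lip by (rule lipschitz_on_nonneg)
  have "0 < y" using \<open>pi \<le> y\<close> pi_gt_zero by linarith
  have h: "0 < pi / y" "pi / y \<le> 1" using \<open>pi \<le> y\<close> \<open>0 < y\<close> by auto
  have "integral {1<..1 + pi / y} b \<le> integral {1<..1 + pi / y} (\<lambda>u. (L u)\<^sup>2)"
    using L_sq_window(1)[OF h] by (intro b_int(2)) auto
  also have "\<dots> \<le> log_sq_window (pi / y)"
    by (rule L_sq_window(2)[OF h])
  finally have window: "M * integral {1<..1 + pi / y} b \<le> M * log_sq_window (pi / y)"
    using \<open>0 \<le> M\<close> by (rule mult_left_mono)
  have "integral {1<..} b \<le> integral {1<..} (\<lambda>u. (L u)\<^sup>2)"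
    using L_sq_integrable by (intro b_int(2)) auto
  then have total: "K * pi / (2 * y) * integral {1<..} b
      \<le> K * integral {1<..} (\<lambda>u. (L u)\<^sup>2) * (pi / (2 * y))"
    using \<open>0 \<le> K\<close> \<open>0 < y\<close>
      mult_left_mono[of "integral {1<..} b" "integral {1<..} (\<lambda>u. (L u)\<^sup>2)" "K * pi / (2 * y)"]
    by (simp add: mult_ac)
  have "b integrable_on {1<..}"
    using L_sq_integrable by (intro b_int(1)) auto
  from integral_weighted_bound[OF b_nonneg b_anti this g_bound g_lip \<open>0 < y\<close>] window total
  show ?thesis by simp
qed

lemma log_sq_decay_weighted:
  fixes b g :: "real \<Rightarrow> real"
  assumes b_nonneg: "\<And>u. 1 < u \<Longrightarrow> 0 \<le> b u" and b_le: "\<And>u. 1 < u \<Longrightarrow> b u \<le> (L u)\<^sup>2"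
    and b_anti: "antimono_on {1<..} b"
    and g_bound: "\<And>u. 1 < u \<Longrightarrow> \<bar>g u\<bar> \<le> M" and g_lip: "lipschitz_on K {1<..} g"
  shows "log_sq_decay \<tau> (\<lambda>u. b u * g u)"
proof -
  have "b integrable_on {1<..}"
    using L_sq_integrable by (intro L_sq_dominated_integrable(1)[OF b_nonneg b_le b_anti]) auto
  moreover have "(\<lambda>y. integral {1<..} (\<lambda>u. b u * g u * \<tau> (u * y))) \<in> O[at_top](\<lambda>y. (ln y)\<^sup>2 / y)"
    by (rule bigo_at_top_of_bound[OF integral_L_sq_weighted_bound[OF assms] bigo_window_bound])
  ultimately show ?thesis
    using integrable_on_weighted[OF b_nonneg _ g_bound lipschitz_on_continuous_on[OF g_lip]]
    by (simp add: log_sq_decay_def mult.assoc)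
qed

lemma log_sq_decay_L_dominated:
  assumes "L_dominated w" "\<And>u. 1 < u \<Longrightarrow> \<bar>g u\<bar> \<le> M" "lipschitz_on K {1<..} g"
  shows "log_sq_decay \<tau> (\<lambda>u. L u * w u * g u)"
  using log_sq_decay_weighted[OF L_dominated_weight[OF assms(1)] assms(2,3)] .

end

definition B :: "real \<Rightarrow> real" where
  "B u = integral {0..1} (\<lambda>v. - ln v / (u\<^sup>2 - v\<^sup>2)\<^sup>2)"

lemma has_integral_neg_ln: "((\<lambda>v. - ln v) has_integral 1) {0..1::real}"
proof -
  define F where "F = (\<lambda>v::real. v - v * ln v)"
  have "((\<lambda>v. - ln v) has_integral F 1 - F 0) {0..1::real}"
  proof (rule fundamental_theorem_of_calculus_at_right)
    show "(F \<longlongrightarrow> F 0) (at_right 0)"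
      unfolding F_def by real_asymp
  qed (auto simp: F_def intro!: derivative_eq_intros)
  then show ?thesis by (simp add: F_def)
qed

lemma integrable_neg_ln_mult:
  fixes f :: "real \<Rightarrow> real"
  assumes "continuous_on {0..1} f"
  shows "(\<lambda>v. - ln v * f v) integrable_on {0..1}"
proof -
  have "(\<lambda>v::real. - ln v) absolutely_integrable_on {0..1}"
  proof (rule nonnegative_absolutely_integrable_1)
    show "(\<lambda>v::real. - ln v) integrable_on {0..1}"
      using has_integral_neg_ln by blast
  next
    fix v :: real assume "v \<in> {0..1}"
    then show "0 \<le> - ln v" by (cases "v = 0") auto
  qed
  moreover obtain M where "\<forall>v\<in>{0..1}. \<bar>f v\<bar> \<le> M"
    using compact_imp_bounded[OF compact_continuous_image[OF assms]] by (auto simp: bounded_real)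
  ultimately have "(\<lambda>v. - ln v * f v) absolutely_integrable_on {0..1}"
    using assms by (intro absolutely_integrable_mult_bounded_continuous) auto
  then show ?thesis by (simp add: absolutely_integrable_on_def)
qed

lemma diff_squares_pos: "1 < u \<Longrightarrow> v \<in> {0..1} \<Longrightarrow> 0 < u\<^sup>2 - (v::real)\<^sup>2"
  by (auto intro!: power_strict_mono)

lemma B_integrand_integrable:
  "1 < (u::real) \<Longrightarrow> (\<lambda>v. - ln v / (u\<^sup>2 - v\<^sup>2)\<^sup>2) integrable_on {0..1}"
  using integrable_neg_ln_mult[of "\<lambda>v. 1 / (u\<^sup>2 - v\<^sup>2)\<^sup>2"] diff_squares_pos[of u]
  by (force intro!: continuous_intros)

lemma has_integral_kernel:
  assumes "1 < u"
  shows "((\<lambda>v. 1 / (u\<^sup>2 - v\<^sup>2)\<^sup>2) has_integral 1 / (2 * u\<^sup>2 * (u\<^sup>2 - 1)) + L u / (4 * u ^ 3)) {0..1}"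
proof -
  define c1 c2 where "c1 = 1 / (4 * u\<^sup>2)" and "c2 = 1 / (4 * u ^ 3)"
  define F where "F v = c1 * (1 / (u - v) - 1 / (u + v)) + c2 * (ln (u + v) - ln (u - v))" for v
  have partial_fractions:
    "1 / (u\<^sup>2 - v\<^sup>2)\<^sup>2 = c1 * (1 / (u - v)\<^sup>2 + 1 / (u + v)\<^sup>2) + c2 * (1 / (u - v) + 1 / (u + v))"
    if "v \<in> {0..1}" for v
  proof -
    have "1 / (a * b)\<^sup>2 = 1 / (a + b)\<^sup>2 * (1 / a\<^sup>2 + 1 / b\<^sup>2) + 2 / (a + b) ^ 3 * (1 / a + 1 / b)"
      if "a \<noteq> 0" "b \<noteq> 0" "a + b \<noteq> 0" for a b :: real
      using that by (simp add: field_simps) algebra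
    from this[of "u - v" "u + v"] that assms show ?thesis
      by (simp add: c1_def c2_def power2_eq_square power3_eq_cube algebra_simps)
  qed
  have "(F has_real_derivative 1 / (u\<^sup>2 - v\<^sup>2)\<^sup>2) (at v)" if "v \<in> {0..1}" for v
    unfolding F_def partial_fractions[OF that] using that assms
    by (auto intro!: derivative_eq_intros simp: power2_eq_square)
  then have "((\<lambda>v. 1 / (u\<^sup>2 - v\<^sup>2)\<^sup>2) has_integral F 1 - F 0) {0..1}"
    by (intro fundamental_theorem_of_calculus)
       (auto simp: has_real_derivative_iff_has_vector_derivative[symmetric] intro: has_field_derivative_at_within)
  moreover have "F 1 - F 0 = c1 * (1 / (u - 1) - 1 / (u + 1)) + c2 * L u"
    using assms by (simp add: F_def L_def ln_div)
  moreover have "c1 * (1 / (u - 1) - 1 / (u + 1)) = 1 / (2 * u\<^sup>2 * ((u - 1) * (u + 1)))"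
  proof -
    have "c * (1 / a - 1 / b) = 1 / (2 * u\<^sup>2 * (a * b))"
      if "c = 1 / (4 * u\<^sup>2)" "b - a = 2" "a \<noteq> 0" "b \<noteq> 0" for a b c
      using that(1,3,4) assms by (simp add: field_simps) (use that(2) in algebra)
    then show ?thesis using assms by (simp add: c1_def)
  qed
  moreover have "(u - 1) * (u + 1) = u\<^sup>2 - 1"
    by (simp add: power2_eq_square algebra_simps)
  ultimately show ?thesis by (simp add: c2_def)
qed

lemma has_integral_neg_ln_div_sq:
  fixes u :: real
  assumes "1 < u"
  shows "((\<lambda>v. - ln v / (u - v)\<^sup>2) has_integral ln (u / (u - 1)) / u) {0..1}"
proof -
  \<comment> \<open>integrate by parts against d(1 / (u - x)), then split 1 / (x (u - x)) into partial fractions\<close>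
  define F where "F x = (ln x - ln (u - x)) / u - ln x / (u - x)" for x
  have "(F has_real_derivative - ln v / (u - v)\<^sup>2) (at v)" if "0 < v" "v \<le> 1" for v
  proof -
    have "(1 / v + 1 / d) / u - (d / v + l) / d\<^sup>2 = - l / d\<^sup>2"
      if "v \<noteq> 0" "d \<noteq> 0" "u \<noteq> 0" "u = v + d" for d l :: real
      using that(1-3) by (simp add: field_simps) (use that(4) in algebra)
    from this[of "u - v" "ln v"] that assms
    have "- ln v / (u - v)\<^sup>2 = (1 / v + 1 / (u - v)) / u - ((u - v) / v + ln v) / (u - v)\<^sup>2"
      by simp
    also have "(F has_real_derivative \<dots>) (at v)"
      unfolding F_def using that assms by (auto intro!: derivative_eq_intros simp: power2_eq_square)
    finally show ?thesis .
  qed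
  moreover have "(F \<longlongrightarrow> F 0) (at_right 0)"
  proof -
    have x_ln_x: "((\<lambda>x::real. x * ln x) \<longlongrightarrow> 0) (at_right 0)" by real_asymp
    have "((\<lambda>x. - (x * ln x / (u * (u - x))) - ln (u - x) / u) \<longlongrightarrow> - (0 / (u * (u - 0))) - ln (u - 0) / u) (at_right 0)"
      using assms by (intro tendsto_intros x_ln_x) auto
    moreover have "\<forall>\<^sub>F x in at_right 0. - (x * ln x / (u * (u - x))) - ln (u - x) / u = F x"
      using eventually_at_right_real[of 0 u] assms
      by (auto elim!: eventually_mono simp: F_def field_simps)
    ultimately have "(F \<longlongrightarrow> - (0 / (u * (u - 0))) - ln (u - 0) / u) (at_right 0)"
      by (rule Lim_transform_eventually)
    moreover have "F 0 = - (0 / (u * (u - 0))) - ln (u - 0) / u"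
      by (simp add: F_def diff_divide_distrib)
    ultimately show ?thesis by simp
  qed
  ultimately have "((\<lambda>v. - ln v / (u - v)\<^sup>2) has_integral F 1 - F 0) {0..1}"
    using assms by (intro fundamental_theorem_of_calculus_at_right) auto
  moreover have "F 1 - F 0 = ln (u / (u - 1)) / u"
    using assms by (simp add: F_def ln_div field_simps)
  ultimately show ?thesis by simp
qed

lemma B_nonneg: "1 < u \<Longrightarrow> 0 \<le> B u"
  unfolding B_def
proof (rule integral_nonneg[OF B_integrand_integrable])
  fix v :: real assume "v \<in> {0..1}"
  then have "0 \<le> - ln v" by (cases "v = 0") auto
  then show "0 \<le> - ln v / (u\<^sup>2 - v\<^sup>2)\<^sup>2" by (rule divide_nonneg_nonneg) simp
qed

lemma B_le:
  assumes "1 < u"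
  shows "B u \<le> L u / u\<^sup>2"
proof -
  have G: "((\<lambda>v. - ln v / (u - v)\<^sup>2 / u\<^sup>2) has_integral ln (u / (u - 1)) / u / u\<^sup>2) {0..1}"
    using has_integral_divide[OF has_integral_neg_ln_div_sq[OF assms]] by simp
  have "- ln v / (u\<^sup>2 - v\<^sup>2)\<^sup>2 \<le> - ln v / (u - v)\<^sup>2 / u\<^sup>2" if "v \<in> {0..1}" for v
  proof -
    have "0 \<le> - ln v" using that by (cases "v = 0") auto
    moreover have "(u - v)\<^sup>2 * u\<^sup>2 \<le> (u - v)\<^sup>2 * (u + v)\<^sup>2"
      using that assms by (intro mult_left_mono power_mono) auto
    moreover have "(u - v)\<^sup>2 * (u + v)\<^sup>2 = (u\<^sup>2 - v\<^sup>2)\<^sup>2"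
      by (simp add: power2_eq_square algebra_simps)
    moreover have "0 < (u - v)\<^sup>2 * u\<^sup>2"
      using that assms by simp
    ultimately have "- ln v / (u\<^sup>2 - v\<^sup>2)\<^sup>2 \<le> - ln v / ((u - v)\<^sup>2 * u\<^sup>2)"
      by (intro divide_left_mono mult_pos_pos) auto
    then show ?thesis by (simp only: divide_divide_eq_left)
  qed
  then have "B u \<le> ln (u / (u - 1)) / u / u\<^sup>2"
    unfolding B_def using B_integrand_integrable[OF assms] G
    by (intro has_integral_le[OF integrable_integral]) auto
  also have "\<dots> \<le> L u / u\<^sup>2"
  proof (intro divide_right_mono)
    have "0 \<le> ln (u / (u - 1))" "ln (u / (u - 1)) \<le> L u"
      using assms by (auto simp: L_def divide_simps)
    moreover have "ln (u / (u - 1)) / u \<le> ln (u / (u - 1)) / 1"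
      using \<open>0 \<le> ln (u / (u - 1))\<close> assms by (intro divide_left_mono) auto
    ultimately show "ln (u / (u - 1)) / u \<le> L u" by simp
  qed simp
  finally show ?thesis .
qed

lemma kernel_weight_antimono:
  fixes u w v :: real
  assumes "1 < u" "u \<le> w" "v \<in> {0..1}"
  shows "w / (w\<^sup>2 - v\<^sup>2)\<^sup>2 \<le> u / (u\<^sup>2 - v\<^sup>2)\<^sup>2"
proof -
  define a b where "a = u\<^sup>2 - v\<^sup>2" and "b = w\<^sup>2 - v\<^sup>2"
  have "0 < a" "a \<le> b"
    using diff_squares_pos[OF assms(1,3)] assms by (auto simp: a_def b_def intro!: power_mono)
  have "u * b - w * a = (w - u) * (u * w + v\<^sup>2)"
    by (simp add: a_def b_def power2_eq_square algebra_simps)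
  moreover have "0 \<le> (w - u) * (u * w + v\<^sup>2)"
    using assms by (intro mult_nonneg_nonneg) auto
  ultimately have "w * a \<le> u * b" by linarith
  then have "w * a * a \<le> u * b * a"
    using \<open>0 < a\<close> by (simp add: mult_right_mono)
  also have "\<dots> \<le> u * b * b"
    using \<open>0 < a\<close> \<open>a \<le> b\<close> assms by (intro mult_left_mono) auto
  finally have "w / b\<^sup>2 \<le> u / a\<^sup>2"
    using \<open>0 < a\<close> \<open>a \<le> b\<close> by (simp add: divide_simps power2_eq_square mult.assoc)
  then show ?thesis by (simp add: a_def b_def)
qed

lemma u_B_antimono: "antimono_on {1<..} (\<lambda>u. u * B u)"
proof (rule monotone_onI)
  fix u w :: real assume "u \<in> {1<..}" "w \<in> {1<..}" "u \<le> w"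
  have eq: "x * B x = integral {0..1} (\<lambda>v. - ln v * (x / (x\<^sup>2 - v\<^sup>2)\<^sup>2))" for x :: real
    unfolding B_def by (simp flip: integral_mult_right add: mult_ac)
  show "w * B w \<le> u * B u"
    unfolding eq
  proof (rule integral_le)
    have int: "(\<lambda>v. - ln v * (x / (x\<^sup>2 - v\<^sup>2)\<^sup>2)) integrable_on {0..1}" if "1 < x" for x :: real
      using integrable_on_mult_right[OF B_integrand_integrable[OF that], of x] by (simp add: mult_ac)
    show "(\<lambda>v. - ln v * (w / (w\<^sup>2 - v\<^sup>2)\<^sup>2)) integrable_on {0..1}"
      using \<open>w \<in> {1<..}\<close> by (intro int) simp
    show "(\<lambda>v. - ln v * (u / (u\<^sup>2 - v\<^sup>2)\<^sup>2)) integrable_on {0..1}"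
      using \<open>u \<in> {1<..}\<close> by (intro int) simp
    fix v :: real assume "v \<in> {0..1}"
    moreover have "0 \<le> - ln v" using \<open>v \<in> {0..1}\<close> by (cases "v = 0") auto
    ultimately show "- ln v * (w / (w\<^sup>2 - v\<^sup>2)\<^sup>2) \<le> - ln v * (u / (u\<^sup>2 - v\<^sup>2)\<^sup>2)"
      using \<open>u \<in> {1<..}\<close> \<open>u \<le> w\<close> by (intro mult_left_mono kernel_weight_antimono) auto
  qed
qed

lemma L_dominated_B: "L_dominated B"
  unfolding L_dominated_def
proof (intro conjI allI impI)
  show "antimono_on {1<..} B"
  proof (rule monotone_onI)
    fix u w :: real assume "u \<in> {1<..}" "w \<in> {1<..}" "u \<le> w"
    then have "w * B w \<le> u * B u"
      using monotone_onD[OF u_B_antimono] by simp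
    also have "\<dots> \<le> w * B u"
      using \<open>u \<le> w\<close> B_nonneg[of u] \<open>u \<in> {1<..}\<close> by (intro mult_right_mono) auto
    finally have "w * B w \<le> w * B u" .
    then show "B w \<le> B u" using \<open>w \<in> {1<..}\<close> by simp
  qed
next
  fix u :: real assume "1 < u"
  show "0 \<le> B u" by (rule B_nonneg[OF \<open>1 < u\<close>])
  have "L u / u\<^sup>2 \<le> L u" using \<open>1 < u\<close> L_pos[of u] by (simp add: divide_simps)
  then show "B u \<le> L u" using B_le[OF \<open>1 < u\<close>] by simp
qed

lemma L_dominated_u_B: "L_dominated (\<lambda>u. u * B u)"
  unfolding L_dominated_def
proof (intro conjI allI impI u_B_antimono)
  fix u :: real assume "1 < u"
  then show "0 \<le> u * B u" using B_nonneg[of u] by simp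
  have "u * B u \<le> u * (L u / u\<^sup>2)"
    using B_le[OF \<open>1 < u\<close>] \<open>1 < u\<close> by (intro mult_left_mono) auto
  also have "\<dots> \<le> L u"
    using \<open>1 < u\<close> L_pos[of u] by (simp add: divide_simps power2_eq_square)
  finally show "u * B u \<le> L u" .
qed

definition q :: "real \<Rightarrow> real" where
  "q u = ln u / (u\<^sup>2 - 1)"

lemma q_nonneg: "1 < u \<Longrightarrow> 0 \<le> q u"
  unfolding q_def by (intro divide_nonneg_pos) (auto simp: one_less_power)

lemma q_le: "1 < u \<Longrightarrow> q u \<le> 1 / (u + 1)"
proof -
  assume "1 < u"
  then have "q u \<le> (u - 1) / (u\<^sup>2 - 1)"
    unfolding q_def using ln_le_minus_one[of u] by (intro divide_right_mono) (auto simp: one_less_power)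
  also have "\<dots> = (u - 1) / ((u - 1) * (u + 1))"
    by (simp add: power2_eq_square algebra_simps)
  also have "\<dots> = 1 / (u + 1)"
    using \<open>1 < u\<close> by simp
  finally show ?thesis .
qed

lemma q_antimono: "antimono_on {1<..} q"
proof (rule monotone_onI)
  fix u w :: real assume "u \<in> {1<..}" "w \<in> {1<..}" "u \<le> w"
  show "q w \<le> q u"
  proof (rule DERIV_nonpos_imp_nonincreasing[OF \<open>u \<le> w\<close>])
    fix x assume "u \<le> x" "x \<le> w"
    with \<open>u \<in> {1<..}\<close> have "1 < x" by simp
    then have "1 < x\<^sup>2" by (simp add: one_less_power)
    have "(q has_real_derivative (1 / x * (x\<^sup>2 - 1) - ln x * (2 * x)) / (x\<^sup>2 - 1)\<^sup>2) (at x)"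
      unfolding q_def[abs_def] using \<open>1 < x\<close> \<open>1 < x\<^sup>2\<close>
      by (auto intro!: derivative_eq_intros simp: power2_eq_square)
    moreover have "1 / x * (x\<^sup>2 - 1) \<le> ln x * (2 * x)"
    proof -
      have "1 - 1 / x\<^sup>2 \<le> ln (x\<^sup>2)"
        using ln_le_minus_one[of "1 / x\<^sup>2"] \<open>1 < x\<close> by (simp add: ln_div)
      then have "x * (1 - 1 / x\<^sup>2) \<le> x * (2 * ln x)"
        using \<open>1 < x\<close> by (intro mult_left_mono) (auto simp: ln_realpow)
      moreover have "1 / x * (x\<^sup>2 - 1) = x * (1 - 1 / x\<^sup>2)"
        using \<open>1 < x\<close> by (simp add: field_simps power2_eq_square)
      ultimately show ?thesis by (simp add: mult_ac)
    qed
    ultimately show "\<exists>y. (q has_real_derivative y) (at x) \<and> y \<le> 0"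
      by (intro exI conjI) (auto intro: divide_nonpos_nonneg)
  qed
qed

lemma L_dominated_q_div_power: "L_dominated (\<lambda>u. q u / (2 * u ^ k))"
  unfolding L_dominated_def
proof (intro conjI allI impI)
  show "antimono_on {1<..} (\<lambda>u. q u / (2 * u ^ k))"
  proof (rule monotone_onI)
    fix u w :: real assume "u \<in> {1<..}" "w \<in> {1<..}" "u \<le> w"
    then show "q w / (2 * w ^ k) \<le> q u / (2 * u ^ k)"
      using monotone_onD[OF q_antimono, of u w] q_nonneg[of u] q_nonneg[of w]
      by (intro frac_le) (auto intro: power_mono)
  qed
next
  fix u :: real assume "1 < u"
  then show "0 \<le> q u / (2 * u ^ k)" using q_nonneg[of u] by simp
  have "1 \<le> u ^ k" using \<open>1 < u\<close> by (simp add: one_le_power)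
  then have "q u / (2 * u ^ k) \<le> q u / 1"
    using q_nonneg[OF \<open>1 < u\<close>] by (intro divide_left_mono) auto
  also have "\<dots> \<le> 2 / (u + 1)"
    using q_le[OF \<open>1 < u\<close>] \<open>1 < u\<close> by (simp add: divide_simps)
  also have "\<dots> \<le> L u" by (rule L_ge[OF \<open>1 < u\<close>])
  finally show "q u / (2 * u ^ k) \<le> L u" .
qed

lemma abs_ln_div_power_le: "1 \<le> n \<Longrightarrow> 1 < (u::real) \<Longrightarrow> \<bar>ln u / (4 * u ^ n)\<bar> \<le> 1"
proof -
  assume "1 \<le> n" "1 < u"
  then have "0 \<le> ln u" "ln u \<le> u" "u \<le> u ^ n"
    using ln_le_minus_one[of u] by (auto intro: order_trans[OF _ power_increasing[of 1 n u]])
  then show ?thesis using \<open>1 < u\<close> by (simp add: abs_of_nonneg divide_simps)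
qed

lemma ln_div_power_derivative_bound:
  assumes "1 < x"
  shows "\<bar>1 - real n * ln x\<bar> / (4 * x ^ (n + 1)) \<le> real (n + 1)"
proof -
  have "0 \<le> ln x" "ln x \<le> x" using assms ln_le_minus_one[of x] by auto
  then have "0 \<le> real n * ln x" "real n * ln x \<le> real n * x"
    by (auto intro: mult_left_mono)
  moreover have "real (n + 1) * x = real n * x + x" by (simp add: algebra_simps)
  ultimately have "\<bar>1 - real n * ln x\<bar> \<le> real (n + 1) * x"
    using assms unfolding abs_le_iff by linarith
  also have "\<dots> \<le> real (n + 1) * (4 * x ^ (n + 1))"
  proof (intro mult_left_mono)
    have "1 \<le> x ^ n" using assms by simp
    then have "1 \<le> 4 * x ^ n" by linarith
    then have "x * 1 \<le> x * (4 * x ^ n)"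
      by (rule mult_left_mono) (use assms in simp)
    then show "x \<le> 4 * x ^ (n + 1)" by (simp add: mult_ac)
  qed simp
  finally show ?thesis using assms by (simp add: divide_le_eq)
qed

lemma lipschitz_ln_div_power:
  assumes "1 \<le> n"
  shows "lipschitz_on (real (n + 1)) {1<..} (\<lambda>u::real. ln u / (4 * u ^ n))"
proof (rule lipschitz_onI)
  have deriv: "((\<lambda>u. ln u / (4 * u ^ n)) has_field_derivative (1 - real n * ln x) / (4 * x ^ (n + 1))) (at x within {1<..})"
    if "x \<in> {1<..}" for x
  proof -
    obtain m where m: "n = Suc m" using assms by (cases n) auto
    have "((\<lambda>u. ln u / (4 * u ^ n)) has_real_derivative
        (inverse x * (4 * x ^ n) - ln x * (4 * (real n * x ^ (n - Suc 0)))) / (4 * x ^ n * (4 * x ^ n))) (at x)"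
      using that by (intro DERIV_divide DERIV_ln DERIV_cmult DERIV_pow) auto
    moreover have "(inverse x * (4 * x ^ n) - ln x * (4 * (real n * x ^ (n - Suc 0)))) / (4 * x ^ n * (4 * x ^ n))
        = (1 - real n * ln x) / (4 * x ^ (n + 1))"
      unfolding m power_Suc using that by (simp add: field_simps)
    ultimately show ?thesis by (simp add: has_field_derivative_at_within)
  qed
  have bound: "norm ((1 - real n * ln x) / (4 * x ^ (n + 1))) \<le> real (n + 1)" if "x \<in> {1<..}" for x
    using ln_div_power_derivative_bound[of x n] that by (simp add: abs_divide)
  show "dist (ln x / (4 * x ^ n)) (ln y / (4 * y ^ n)) \<le> real (n + 1) * dist x y"
    if "x \<in> {1<..}" "y \<in> {1<..}" for x y :: real
    using field_differentiable_bound[OF convex_real_interval(3) deriv bound that] by (simp add: dist_norm)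
qed simp

lemma D_eq:
  assumes "1 < u"
  shows "D u = L u * B u - L u * (q u / (2 * u\<^sup>2)) - L u * L u * (ln u / (4 * u ^ 3))"
proof -
  define A where "A = 1 / (2 * u\<^sup>2 * (u\<^sup>2 - 1)) + L u / (4 * u ^ 3)"
  have "((\<lambda>v. - ln v / (u\<^sup>2 - v\<^sup>2)\<^sup>2 - ln u * (1 / (u\<^sup>2 - v\<^sup>2)\<^sup>2)) has_integral B u - ln u * A) {0..1}"
    unfolding A_def B_def
    by (intro has_integral_diff integrable_integral B_integrand_integrable has_integral_mult_right
        has_integral_kernel assms)
  then have "((\<lambda>v. ell u v / (u\<^sup>2 - v\<^sup>2)\<^sup>2) has_integral B u - ln u * A) {0..1}"
  proof (rule has_integral_spike[of "{0}", rotated 2])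
    fix v :: real assume "v \<in> {0..1} - {0}"
    then have "ell u v = - ln u - ln v"
      using assms by (simp add: ell_def ln_div ln_mult)
    then show "ell u v / (u\<^sup>2 - v\<^sup>2)\<^sup>2 = - ln v / (u\<^sup>2 - v\<^sup>2)\<^sup>2 - ln u * (1 / (u\<^sup>2 - v\<^sup>2)\<^sup>2)"
      by (simp add: diff_divide_distrib)
  qed simp
  then have "D u = L u * (B u - ln u * A)"
    unfolding D_def by (simp add: integral_unique)
  then show ?thesis
    by (simp add: A_def q_def algebra_simps power2_eq_square)
qed

context pi_antiperiodic
begin

lemma log_sq_decay_L_dominated_const: "L_dominated w \<Longrightarrow> log_sq_decay \<tau> (\<lambda>u. L u * w u)"
  using log_sq_decay_L_dominated[of w "\<lambda>_. 1" 1 0] by (simp add: lipschitz_on_constant)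

lemma log_sq_decay_L_sq_ln_div_power:
  assumes "1 \<le> n"
  shows "log_sq_decay \<tau> (\<lambda>u. L u * L u * (ln u / (4 * u ^ n)))"
proof (rule log_sq_decay_L_dominated[OF L_dominated_L])
  show "\<bar>ln u / (4 * u ^ n)\<bar> \<le> 1" if "1 < u" for u :: real
    using abs_ln_div_power_le[OF assms that] .
  show "lipschitz_on (real (n + 1)) {1<..} (\<lambda>u::real. ln u / (4 * u ^ n))"
    using lipschitz_ln_div_power[OF assms] .
qed

lemma log_sq_decay_D: "log_sq_decay \<tau> D"
proof -
  have "log_sq_decay \<tau> (\<lambda>u. L u * B u - L u * (q u / (2 * u\<^sup>2)) - L u * L u * (ln u / (4 * u ^ 3)))"
    by (intro log_sq_decay_diff log_sq_decay_L_dominated_const log_sq_decay_L_sq_ln_div_power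
        L_dominated_B L_dominated_q_div_power) simp
  then show ?thesis
    by (rule log_sq_decay_cong[rotated]) (simp add: D_eq)
qed

lemma log_sq_decay_u_D: "log_sq_decay \<tau> (\<lambda>u. u * D u)"
proof -
  have "log_sq_decay \<tau> (\<lambda>u. L u * (u * B u) - L u * (q u / (2 * u)) - L u * L u * (ln u / (4 * u\<^sup>2)))"
    by (intro log_sq_decay_diff log_sq_decay_L_dominated_const log_sq_decay_L_sq_ln_div_power
        L_dominated_u_B L_dominated_q_div_power[of 1, simplified]) simp
  then show ?thesis
    by (rule log_sq_decay_cong[rotated]) (simp add: D_eq field_simps power2_eq_square power3_eq_cube)
qed

end

lemma pi_antiperiodic_cos: "pi_antiperiodic cos"
  by unfold_locales (auto intro: continuous_intros)

lemma pi_antiperiodic_sin: "pi_antiperiodic sin"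
  by unfold_locales (auto intro: continuous_intros)

theorem proposition4:
  shows "(\<forall>y::real. (\<lambda>u. D u * cos (u * y)) integrable_on {1<..}
                    \<and> (\<lambda>u. u * D u * sin (u * y)) integrable_on {1<..})
    \<and> (\<lambda>y. integral {1<..} (\<lambda>u. D u * cos (u * y))) \<in> O[at_top](\<lambda>y. (ln y)\<^sup>2 / y)
    \<and> (\<lambda>y. integral {1<..} (\<lambda>u. u * D u * sin (u * y))) \<in> O[at_top](\<lambda>y. (ln y)\<^sup>2 / y)"
  using pi_antiperiodic.log_sq_decay_D[OF pi_antiperiodic_cos]
    pi_antiperiodic.log_sq_decay_u_D[OF pi_antiperiodic_sin]
  unfolding log_sq_decay_def by blast

end
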